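(* Consider economies with individual endowments and single-peaked preferences. A rule on this domain satisfies own-peak-onliness, efficiency, the endowments guarantee, and not obvious manipulability (NOM) if and only if it is a simple reallocation rule.
   Context: Let $N=\{1,\dots,n\}$ be a finite set of agents. A preference $R_i$ is a continuous complete preorder on $\mathbb{R}_+\cup\{\infty\}$ ($P_i$ strict, $I_i$ indifference); its peak $p(R_i)$ is the set of maximal elements. $R_i$ is single-peaked if $p(R_i)$ is a singleton (identified with its element) and for $x,x'\in\mathbb{R}_+$, $xP_ix'$ whenever $x'<x\le p(R_i)$ or $p(R_i)\le x<x'$; $\mathcal{SP}$ is the set of these. An economy is $(R,\omega)$ with $R\in\mathcal{SP}^n$ and an endowment profile $\omega=(\omega_i)_{i\in N}\in\mathbb{R}^n_+$ with $\Omega=\sum_j\omega_j>0$. A rule assigns to each economy $\varphi(R,\omega)\in\mathbb{R}^n_+$ with $\sum_j\varphi_j(R,\omega)=\Omega$. Properties: Efficiency: no $x\in\mathbb{R}^n_+$ with $\sum_jx_j=\Omega$ has $x_iR_i\varphi_i(R,\omega)$ for all $i$ and $x_iP_i\varphi_i(R,\omega)$ for some $i$. Own-peak-onliness: $p(R_i')=p(R_i)$ implies $\varphi_i(R,\omega)=\varphi_i(R_i',R_{-i},\omega)$. Endowments guarantee: $p(R_i)=\omega_i$ implies $\varphi_i(R,\omega)I_i\omega_i$. Option set $O^\varphi(R_i,\omega)=\{\varphi_i(R_i,R_{-i},\omega):R_{-i}\in\mathcal{SP}^{n-1}\}$; $R_i'$ is a manipulation at $(R_i,\omega)$ if $\varphi_i(R_i',R_{-i},\omega)P_i\varphi_i(R_i,R_{-i},\omega)$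 for some $R_{-i}$, and an obvious manipulation if moreover each $x'\in O^\varphi(R_i',\omega)$ satisfies $x'P_ix$ for some $x\in O^\varphi(R_i,\omega)$; NOM means there is no obvious manipulation. Simple reallocation rule: let $z(R,\omega)=\sum_jp(R_j)-\Omega$; agent $i$ is simple if ($z\ge0$ and $p(R_i)<\omega_i$) or ($z\le0$ and $p(R_i)>\omega_i$). An own-peak-only rule is a simple reallocation rule if for every economy it assigns to each simple agent his peak $p(R_i)$ and to each non-simple agent an amount in the closed interval between $\omega_i$ and $p(R_i)$. *)

theory Defs
  imports "HOL-Library.Extended_Nonnegative_Real"
begin

type_synonym pref = "ennreal \<Rightarrow> ennreal \<Rightarrow> bool"

definition complete_preorder :: "pref \<Rightarrow> bool" where
  "complete_preorder R \<longleftrightarrow> (\<forall>x y. R x y \<or> R y x) \<and> (\<forall>x y z. R x y \<longrightarrow> R y z \<longrightarrow> R x z)"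

definition continuous_pref :: "pref \<Rightarrow> bool" where
  "continuous_pref R \<longleftrightarrow> (\<forall>x. closed {y. R y x} \<and> closed {y. R x y})"

definition strict :: "pref \<Rightarrow> ennreal \<Rightarrow> ennreal \<Rightarrow> bool" where
  "strict R x y \<longleftrightarrow> R x y \<and> \<not> R y x"

definition indiff :: "pref \<Rightarrow> ennreal \<Rightarrow> ennreal \<Rightarrow> bool" where
  "indiff R x y \<longleftrightarrow> R x y \<and> R y x"

definition peakset :: "pref \<Rightarrow> ennreal set" where
  "peakset R = {x. \<forall>y. R x y}"

definition peak :: "pref \<Rightarrow> ennreal" where
  "peak R = (THE a. peakset R = {a})"

definition single_peaked :: "pref \<Rightarrow> bool" where
  "single_peaked R \<longleftrightarrow> complete_preorder R \<and> continuous_pref R \<and>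
     (\<exists>a. peakset R = {a} \<and>
        (\<forall>x x'. x \<noteq> \<infinity> \<longrightarrow> x' \<noteq> \<infinity> \<longrightarrow>
            ((x' < x \<and> x \<le> a) \<or> (a \<le> x \<and> x < x')) \<longrightarrow> strict R x x'))"

definition endowment_profile :: "('n::finite \<Rightarrow> real) \<Rightarrow> bool" where
  "endowment_profile \<omega> \<longleftrightarrow> (\<forall>i. 0 \<le> \<omega> i) \<and> sum \<omega> UNIV > 0"

definition economy :: "('n::finite \<Rightarrow> pref) \<Rightarrow> ('n \<Rightarrow> real) \<Rightarrow> bool" where
  "economy R \<omega> \<longleftrightarrow> (\<forall>i. single_peaked (R i)) \<and> endowment_profile \<omega>"

type_synonym 'n rule = "('n \<Rightarrow> pref) \<Rightarrow> ('n \<Rightarrow> real) \<Rightarrow> 'n \<Rightarrow> real"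

definition is_rule :: "('n::finite) rule \<Rightarrow> bool" where
  "is_rule \<phi> \<longleftrightarrow> (\<forall>R \<omega>. economy R \<omega> \<longrightarrow>
      (\<forall>i. 0 \<le> \<phi> R \<omega> i) \<and> sum (\<phi> R \<omega>) UNIV = sum \<omega> UNIV)"

definition efficient :: "('n::finite) rule \<Rightarrow> bool" where
  "efficient \<phi> \<longleftrightarrow> (\<forall>R \<omega>. economy R \<omega> \<longrightarrow>
      \<not> (\<exists>x::'n \<Rightarrow> real. (\<forall>i. 0 \<le> x i) \<and> sum x UNIV = sum \<omega> UNIV \<and>
            (\<forall>i. R i (ennreal (x i)) (ennreal (\<phi> R \<omega> i))) \<and>
            (\<exists>i. strict (R i) (ennreal (x i)) (ennreal (\<phi> R \<omega> i)))))"

definition own_peak_only :: "('n::finite) rule \<Rightarrow> bool" where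
  "own_peak_only \<phi> \<longleftrightarrow> (\<forall>R \<omega> i Ri'. economy R \<omega> \<longrightarrow> single_peaked Ri' \<longrightarrow>
      peakset Ri' = peakset (R i) \<longrightarrow> \<phi> R \<omega> i = \<phi> (R(i := Ri')) \<omega> i)"

definition endowments_guarantee :: "('n::finite) rule \<Rightarrow> bool" where
  "endowments_guarantee \<phi> \<longleftrightarrow> (\<forall>R \<omega> i. economy R \<omega> \<longrightarrow> peak (R i) = ennreal (\<omega> i) \<longrightarrow>
      indiff (R i) (ennreal (\<phi> R \<omega> i)) (ennreal (\<omega> i)))"

definition option_set :: "('n::finite) rule \<Rightarrow> 'n \<Rightarrow> pref \<Rightarrow> ('n \<Rightarrow> real) \<Rightarrow> real set" where
  "option_set \<phi> i Ri \<omega> = {\<phi> R \<omega> i | R. (\<forall>j. single_peaked (R j)) \<and> R i = Ri}"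

definition manipulation :: "('n::finite) rule \<Rightarrow> 'n \<Rightarrow> pref \<Rightarrow> pref \<Rightarrow> ('n \<Rightarrow> real) \<Rightarrow> bool" where
  "manipulation \<phi> i Ri Ri' \<omega> \<longleftrightarrow> (\<exists>R. (\<forall>j. single_peaked (R j)) \<and> R i = Ri \<and>
      strict Ri (ennreal (\<phi> (R(i := Ri')) \<omega> i)) (ennreal (\<phi> R \<omega> i)))"

definition obvious_manipulation :: "('n::finite) rule \<Rightarrow> 'n \<Rightarrow> pref \<Rightarrow> pref \<Rightarrow> ('n \<Rightarrow> real) \<Rightarrow> bool" where
  "obvious_manipulation \<phi> i Ri Ri' \<omega> \<longleftrightarrow> manipulation \<phi> i Ri Ri' \<omega> \<and>
      (\<forall>x'\<in>option_set \<phi> i Ri' \<omega>. \<exists>x\<in>option_set \<phi> i Ri \<omega>. strict Ri (ennreal x') (ennreal x))"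

definition NOM :: "('n::finite) rule \<Rightarrow> bool" where
  "NOM \<phi> \<longleftrightarrow> (\<forall>\<omega> i Ri Ri'. endowment_profile \<omega> \<longrightarrow> single_peaked Ri \<longrightarrow> single_peaked Ri' \<longrightarrow>
      \<not> obvious_manipulation \<phi> i Ri Ri' \<omega>)"

text \<open>z(R,omega) \<ge> 0 iff the sum of peaks is at least Omega (computed in ennreal,
  since peaks may be \<infinity>).\<close>
definition simple_agent :: "('n::finite \<Rightarrow> pref) \<Rightarrow> ('n \<Rightarrow> real) \<Rightarrow> 'n \<Rightarrow> bool" where
  "simple_agent R \<omega> i \<longleftrightarrow>
     ((\<Sum>j\<in>UNIV. peak (R j)) \<ge> ennreal (sum \<omega> UNIV) \<and> peak (R i) < ennreal (\<omega> i)) \<or>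
     ((\<Sum>j\<in>UNIV. peak (R j)) \<le> ennreal (sum \<omega> UNIV) \<and> peak (R i) > ennreal (\<omega> i))"

definition simple_reallocation_rule :: "('n::finite) rule \<Rightarrow> bool" where
  "simple_reallocation_rule \<phi> \<longleftrightarrow> own_peak_only \<phi> \<and>
     (\<forall>R \<omega>. economy R \<omega> \<longrightarrow> (\<forall>i.
        (simple_agent R \<omega> i \<longrightarrow> ennreal (\<phi> R \<omega> i) = peak (R i)) \<and>
        (\<not> simple_agent R \<omega> i \<longrightarrow>
           min (ennreal (\<omega> i)) (peak (R i)) \<le> ennreal (\<phi> R \<omega> i) \<and>
           ennreal (\<phi> R \<omega> i) \<le> max (ennreal (\<omega> i)) (peak (R i)))))"

end

theory Submission
  imports Defs
begin

(* Efficiency forces the allocation to lie weakly on one side of all peaks, the side given by the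
   sign of the excess demand z. By the endowments guarantee, an agent who reports a preference
   peaked at his endowment receives exactly his endowment whatever the others report; so NOM
   forbids that an agent strictly prefers his endowment to his allocation under any single-peaked
   preference with his peak. Since piecewise linear preferences with suitable slopes rank any
   point on one side of the peak above any given point on the other side, this pins the
   allocation between endowment and peak; with efficiency, simple agents get their peaks.
   Conversely, a simple reallocation rule is one-sided, hence efficient, returns the endowment to
   an agent peaked at it, and therefore always offers the endowment, which every option of a
   truthful report weakly beats. *)

section \<open>Single-peaked preferences\<close>

lemma single_peaked_peakset:
  assumes "single_peaked R"
  shows "peakset R = {peak R}"
proof -
  obtain a where "peakset R = {a}"
    using assms unfolding single_peaked_def by blast
  then show ?thesis unfolding peak_def by simp
qed

lemma single_peaked_refl: "single_peaked R \<Longrightarrow> R x x"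
  unfolding single_peaked_def complete_preorder_def by blast

lemma single_peaked_peak_best: "single_peaked R \<Longrightarrow> R (peak R) y"
  using single_peaked_peakset[of R] unfolding peakset_def by blast

lemma single_peaked_indiff_peak:
  assumes "single_peaked R" "indiff R x (peak R)"
  shows "x = peak R"
proof -
  have "R x y" for y
    using assms single_peaked_peak_best[OF assms(1), of y]
    unfolding single_peaked_def complete_preorder_def indiff_def by blast
  then have "x \<in> peakset R" unfolding peakset_def by blast
  then show ?thesis using single_peaked_peakset[OF assms(1)] by simp
qed

lemma single_peaked_monotone:
  assumes "single_peaked R" "x \<noteq> \<infinity>" "x' \<noteq> \<infinity>"
    "(x' < x \<and> x \<le> peak R) \<or> (peak R \<le> x \<and> x < x')"
  shows "strict R x x'"
proof -
  obtain a where "peakset R = {a}"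
    "\<And>x x'. x \<noteq> \<infinity> \<Longrightarrow> x' \<noteq> \<infinity> \<Longrightarrow> (x' < x \<and> x \<le> a) \<or> (a \<le> x \<and> x < x') \<Longrightarrow> strict R x x'"
    using assms(1) unfolding single_peaked_def by blast
  moreover have "peak R = a" using calculation(1) unfolding peak_def by simp
  ultimately show ?thesis using assms(2-) by blast
qed

lemma single_peaked_strict_below:
  assumes "single_peaked R" "0 \<le> y" "y < x" "ennreal x \<le> peak R"
  shows "strict R (ennreal x) (ennreal y)"
  using single_peaked_monotone[OF assms(1)] assms(2-) by (simp add: ennreal_less_iff)

lemma single_peaked_strict_above:
  assumes "single_peaked R" "0 \<le> y" "y < x" "peak R \<le> ennreal y"
  shows "strict R (ennreal y) (ennreal x)"
  using single_peaked_monotone[OF assms(1)] assms(2-) by (simp add: ennreal_less_iff)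

lemma single_peaked_weakly_prefers_between:
  assumes "single_peaked R" "0 \<le> w" "0 \<le> x"
    "min (ennreal w) (peak R) \<le> ennreal x" "ennreal x \<le> max (ennreal w) (peak R)"
  shows "R (ennreal x) (ennreal w)"
proof (cases "x = w")
  case True
  then show ?thesis using single_peaked_refl[OF assms(1)] by simp
next
  case False
  then have "(w < x \<and> ennreal x \<le> peak R) \<or> (x < w \<and> peak R \<le> ennreal x)"
    using assms(2-) by (auto simp: min_le_iff_disj le_max_iff_disj ennreal_less_iff)
  then have "strict R (ennreal x) (ennreal w)"
    using single_peaked_strict_below[OF assms(1) \<open>0 \<le> w\<close>]
      single_peaked_strict_above[OF assms(1) \<open>0 \<le> x\<close>] by blast
  then show ?thesis unfolding strict_def by simp
qed

section \<open>Piecewise linear single-peaked preferences\<close>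

text \<open>Up to the constant \<open>r * q\<close>, the loss of \<open>x\<close> is \<open>l * (q - x)\<close> left of the peak \<open>q\<close> and
  \<open>r * (x - q)\<close> right of it; min and max keep it continuous at \<open>\<infinity>\<close>, where ennreal
  subtraction is not.\<close>

definition kinked_loss :: "real \<Rightarrow> real \<Rightarrow> real \<Rightarrow> ennreal \<Rightarrow> ennreal" where
  "kinked_loss l r q x = ennreal l * (ennreal q - min x (ennreal q)) + ennreal r * max x (ennreal q)"

definition kinked_pref :: "real \<Rightarrow> real \<Rightarrow> real \<Rightarrow> pref" where
  "kinked_pref l r q x y \<longleftrightarrow> kinked_loss l r q x \<le> kinked_loss l r q y"

lemma kinked_loss_ennreal:
  assumes "0 \<le> l" "0 \<le> r" "0 \<le> q" "0 \<le> x"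
  shows "kinked_loss l r q (ennreal x) = ennreal (l * max (q - x) 0 + r * max x q)"
proof -
  have "ennreal q - min (ennreal x) (ennreal q) = ennreal (max (q - x) 0)"
    using assms by (cases "x \<le> q") (auto simp: min_def max_def ennreal_minus_if)
  moreover have "max (ennreal x) (ennreal q) = ennreal (max x q)"
    using assms by (cases "x \<le> q") (auto simp: max_def)
  ultimately show ?thesis
    using assms by (simp add: kinked_loss_def ennreal_mult[symmetric])
qed

lemma kinked_pref_strict_iff:
  assumes "0 \<le> l" "0 \<le> r" "0 \<le> q" "0 \<le> x" "0 \<le> y"
  shows "strict (kinked_pref l r q) (ennreal x) (ennreal y) \<longleftrightarrow>
    l * max (q - x) 0 + r * max x q < l * max (q - y) 0 + r * max y q"
  using assms
  unfolding strict_def kinked_pref_def kinked_loss_ennreal[OF assms(1-4)] kinked_loss_ennreal[OF assms(1-3,5)]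
  by (auto simp: ennreal_le_iff not_le simp del: ennreal_plus)

lemma continuous_kinked_loss:
  "0 \<le> l \<Longrightarrow> 0 \<le> r \<Longrightarrow> continuous_on UNIV (kinked_loss l r q)"
  unfolding kinked_loss_def
  by (intro continuous_on_add_ennreal ennreal_continuous_on_cmult continuous_on_diff_ennreal
      continuous_on_min continuous_on_max continuous_on_const continuous_on_id)
    (auto simp: min_def top_unique)

lemma single_peaked_kinked_pref:
  assumes "0 \<le> q" "0 < l" "0 < r"
  shows "single_peaked (kinked_pref l r q)" "peak (kinked_pref l r q) = ennreal q"
proof -
  let ?R = "kinked_pref l r q"
  have finite_ennreal: "\<exists>t. 0 \<le> t \<and> x = ennreal t" if "x \<noteq> \<infinity>" for x
    using that by (cases x) auto
  have peak_unique: "strict ?R (ennreal q) x" if "x \<noteq> ennreal q" for x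
  proof (cases "x = \<infinity>")
    case True
    then show ?thesis
      using assms unfolding strict_def kinked_pref_def
      by (simp add: kinked_loss_ennreal kinked_loss_def ennreal_mult_top ennreal_mult[symmetric] top_unique)
  next
    case False
    then obtain t where "0 \<le> t" "x = ennreal t" using finite_ennreal by blast
    moreover have "r * q < l * max (q - t) 0 + r * max t q"
      using assms \<open>x \<noteq> ennreal q\<close> calculation
      by (cases "t < q") (auto simp: max_def intro: add_pos_nonneg)
    ultimately show ?thesis using assms by (simp add: kinked_pref_strict_iff)
  qed
  have peakset: "peakset ?R = {ennreal q}"
  proof -
    have "?R (ennreal q) y" for y
      using peak_unique[of y] by (cases "y = ennreal q") (auto simp: strict_def kinked_pref_def)
    moreover have "x = ennreal q" if "\<forall>y. ?R x y" for x
      using that peak_unique[of x] unfolding strict_def by blast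
    ultimately show ?thesis unfolding peakset_def by blast
  qed
  show "single_peaked ?R"
    unfolding single_peaked_def
  proof (intro conjI exI)
    show "complete_preorder ?R"
      unfolding complete_preorder_def kinked_pref_def by auto
    show "continuous_pref ?R"
      unfolding continuous_pref_def kinked_pref_def
      using continuous_kinked_loss[of l r q] assms
      by (auto intro!: closed_Collect_le continuous_on_const)
    show "peakset ?R = {ennreal q}" by (rule peakset)
    show "\<forall>x x'. x \<noteq> \<infinity> \<longrightarrow> x' \<noteq> \<infinity> \<longrightarrow>
        (x' < x \<and> x \<le> ennreal q \<or> ennreal q \<le> x \<and> x < x') \<longrightarrow> strict ?R x x'"
    proof (intro allI impI)
      fix x x' assume "x \<noteq> \<infinity>" "x' \<noteq> \<infinity>" and
        side: "x' < x \<and> x \<le> ennreal q \<or> ennreal q \<le> x \<and> x < x'"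
      then obtain t t' where "0 \<le> t" "x = ennreal t" "0 \<le> t'" "x' = ennreal t'"
        using finite_ennreal by metis
      moreover have "t' < t \<and> t \<le> q \<or> q \<le> t \<and> t < t'"
        using side calculation assms by (auto simp: ennreal_less_iff)
      then have "l * max (q - t) 0 + r * max t q < l * max (q - t') 0 + r * max t' q"
        using assms by (auto simp: max_def)
      ultimately show "strict ?R x x'" using assms by (simp add: kinked_pref_strict_iff)
    qed
  qed
  then show "peak ?R = ennreal q"
    using peakset single_peaked_peakset by simp
qed

lemma exists_single_peaked_across_peak:
  assumes "0 \<le> u" "0 \<le> v" "u < q \<and> q < v \<or> v < q \<and> q < u"
  shows "\<exists>R. single_peaked R \<and> peak R = ennreal q \<and> strict R (ennreal u) (ennreal v)"
proof -
  obtain l r where slopes: "0 < l" "0 < r"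
    and cheaper: "l * max (q - u) 0 + r * max u q < l * max (q - v) 0 + r * max v q"
  proof (cases "u < q")
    case True
    then have "0 < (v - q) * (q - u)" using assms by simp
    then show ?thesis
      using that[of "v - q" "2 * (q - u)"] True assms by (simp add: max_def algebra_simps)
  next
    case False
    then have "0 < (u - q) * (q - v)" using assms by simp
    then show ?thesis
      using that[of "2 * (u - q)" "q - v"] False assms by (simp add: max_def algebra_simps)
  qed
  have "0 \<le> q" using assms by auto
  then show ?thesis
    using single_peaked_kinked_pref[OF _ slopes] kinked_pref_strict_iff cheaper slopes assms(1,2)
    by (metis less_imp_le)
qed

section \<open>Efficiency\<close>

lemma economyD:
  assumes "economy R \<omega>"
  shows "single_peaked (R i)" "0 \<le> \<omega> i" "endowment_profile \<omega>"
  using assms unfolding economy_def endowment_profile_def by auto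

lemma is_ruleD:
  assumes "is_rule \<phi>" "economy R \<omega>"
  shows "0 \<le> \<phi> R \<omega> i" "sum (\<phi> R \<omega>) UNIV = sum \<omega> UNIV"
  using assms unfolding is_rule_def by auto

lemma ennreal_sum_strict_mono:
  fixes f g :: "'a \<Rightarrow> ennreal"
  assumes "finite A" "j \<in> A" "\<And>k. k \<in> A \<Longrightarrow> f k \<le> g k" "f j < g j" "sum g A < \<infinity>"
  shows "sum f A < sum g A"
proof -
  have split: "sum f A = f j + sum f (A - {j})" "sum g A = g j + sum g (A - {j})"
    using assms(1,2) by (simp_all add: sum.remove)
  then have "sum g (A - {j}) \<noteq> \<infinity>" using assms(5) by (auto simp: top_unique)
  have "f j + sum f (A - {j}) \<le> f j + sum g (A - {j})"
    using assms(3) by (intro add_left_mono sum_mono) auto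
  also have "\<dots> < g j + sum g (A - {j})"
    using \<open>sum g (A - {j}) \<noteq> \<infinity>\<close> assms(4)
      ennreal_add_left_cancel_less[of "sum g (A - {j})" "f j" "g j"]
    by (simp add: add.commute)
  finally show ?thesis using split by simp
qed

lemma efficient_allocation_one_sided:
  fixes \<phi> :: "('n::finite) rule"
  assumes rule: "is_rule \<phi>" and eff: "efficient \<phi>" and ec: "economy R \<omega>"
  shows "(\<forall>k. ennreal (\<phi> R \<omega> k) \<le> peak (R k)) \<or> (\<forall>k. peak (R k) \<le> ennreal (\<phi> R \<omega> k))"
proof (rule ccontr)
  define a where "a = \<phi> R \<omega>"
  assume "\<not> ?thesis"
  then obtain j k where j: "peak (R j) < ennreal (a j)" and k: "ennreal (a k) < peak (R k)"
    unfolding a_def by (auto simp: not_le)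
  have a0: "\<And>l. 0 \<le> a l" using is_ruleD[OF rule ec] unfolding a_def by simp
  have "j \<noteq> k" using j k by (metis order.strict_trans not_less_iff_gr_or_eq)
  obtain qj where qj: "peak (R j) = ennreal qj" "0 \<le> qj"
    using j by (cases "peak (R j)") auto
  have "qj < a j" using j qj by (simp add: ennreal_less_iff a0)
  obtain e where e: "0 < e" "e \<le> a j - qj" "ennreal (a k + e) \<le> peak (R k)"
  proof (cases "peak (R k)")
    case (real qk)
    then have "a k < qk" using k a0 by (simp add: ennreal_less_iff)
    then show ?thesis
      using that[of "min (a j - qj) (qk - a k)"] \<open>qj < a j\<close> real by auto
  qed (use that[of "a j - qj"] \<open>qj < a j\<close> in simp)
  \<comment> \<open>moving \<open>e\<close> from \<open>j\<close>, above his peak, to \<open>k\<close>, below his, helps both\<close>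
  define x where "x l = a l + (if l = k then e else 0) - (if l = j then e else 0)" for l
  have x0: "\<forall>l. 0 \<le> x l" using a0 e qj \<open>j \<noteq> k\<close> by (auto simp: x_def)
  have "sum x UNIV = sum \<omega> UNIV"
    using is_ruleD(2)[OF rule ec] unfolding x_def a_def
    by (simp add: sum.distrib sum_subtractf)
  moreover have better_j: "strict (R j) (ennreal (x j)) (ennreal (a j))"
    using single_peaked_strict_above[OF economyD(1)[OF ec], of "x j" "a j"] x0 e qj \<open>j \<noteq> k\<close>
    by (simp add: x_def)
  moreover have better_k: "strict (R k) (ennreal (x k)) (ennreal (a k))"
    using single_peaked_strict_below[OF economyD(1)[OF ec], of "a k" "x k"] a0 e \<open>j \<noteq> k\<close>
    by (simp add: x_def)
  moreover have "R l (ennreal (x l)) (ennreal (a l))" for l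
    using better_j better_k single_peaked_refl[OF economyD(1)[OF ec]]
    by (cases "l = j \<or> l = k") (auto simp: x_def strict_def)
  ultimately show False
    using eff ec x0 unfolding efficient_def a_def by blast
qed

lemma efficient_allocation_below_peaks:
  fixes \<phi> :: "('n::finite) rule"
  assumes rule: "is_rule \<phi>" and eff: "efficient \<phi>" and ec: "economy R \<omega>"
    and demand: "ennreal (sum \<omega> UNIV) \<le> (\<Sum>j\<in>UNIV. peak (R j))"
  shows "ennreal (\<phi> R \<omega> i) \<le> peak (R i)"
proof (rule ccontr)
  assume "\<not> ?thesis"
  then have i: "peak (R i) < ennreal (\<phi> R \<omega> i)" by simp
  then have "\<forall>k. peak (R k) \<le> ennreal (\<phi> R \<omega> k)"
    using efficient_allocation_one_sided[OF rule eff ec] by (meson leD)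
  then have "(\<Sum>j\<in>UNIV. peak (R j)) < (\<Sum>j\<in>UNIV. ennreal (\<phi> R \<omega> j))"
    using ennreal_sum_strict_mono[of UNIV i "\<lambda>k. peak (R k)" "\<lambda>k. ennreal (\<phi> R \<omega> k)"] i
      is_ruleD(1)[OF rule ec] by simp
  also have "\<dots> = ennreal (sum \<omega> UNIV)"
    using is_ruleD[OF rule ec] by simp
  finally show False using demand by simp
qed

lemma efficient_allocation_above_peaks:
  fixes \<phi> :: "('n::finite) rule"
  assumes rule: "is_rule \<phi>" and eff: "efficient \<phi>" and ec: "economy R \<omega>"
    and demand: "(\<Sum>j\<in>UNIV. peak (R j)) \<le> ennreal (sum \<omega> UNIV)"
  shows "peak (R i) \<le> ennreal (\<phi> R \<omega> i)"
proof (rule ccontr)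
  assume "\<not> ?thesis"
  then have i: "ennreal (\<phi> R \<omega> i) < peak (R i)" by simp
  then have "\<forall>k. ennreal (\<phi> R \<omega> k) \<le> peak (R k)"
    using efficient_allocation_one_sided[OF rule eff ec] by (meson leD)
  moreover have "(\<Sum>j\<in>UNIV. peak (R j)) < \<infinity>"
    using demand by (simp add: less_top order.strict_trans1)
  ultimately have "(\<Sum>j\<in>UNIV. ennreal (\<phi> R \<omega> j)) < (\<Sum>j\<in>UNIV. peak (R j))"
    using ennreal_sum_strict_mono[of UNIV i "\<lambda>k. ennreal (\<phi> R \<omega> k)" "\<lambda>k. peak (R k)"] i by simp
  also have "\<dots> \<le> ennreal (sum \<omega> UNIV)" by (rule demand)
  also have "\<dots> = (\<Sum>j\<in>UNIV. ennreal (\<phi> R \<omega> j))"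
    using is_ruleD[OF rule ec] by simp
  finally show False by simp
qed

lemma endowments_guarantee_at_endowment_peak:
  assumes rule: "is_rule \<phi>" and eg: "endowments_guarantee \<phi>" and ec: "economy R \<omega>"
    and peak: "peak (R i) = ennreal (\<omega> i)"
  shows "\<phi> R \<omega> i = \<omega> i"
proof -
  have "indiff (R i) (ennreal (\<phi> R \<omega> i)) (peak (R i))"
    using eg ec peak unfolding endowments_guarantee_def by simp
  then have "ennreal (\<phi> R \<omega> i) = peak (R i)"
    by (rule single_peaked_indiff_peak[OF economyD(1)[OF ec]])
  then show ?thesis using peak is_ruleD(1)[OF rule ec] economyD(2)[OF ec] by simp
qed

lemma NOM_endowment_not_preferred:
  fixes \<phi> :: "('n::finite) rule"
  assumes rule: "is_rule \<phi>" and opo: "own_peak_only \<phi>" and eg: "endowments_guarantee \<phi>"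
    and nom: "NOM \<phi>" and ec: "economy R \<omega>"
    and sp: "single_peaked Rs" and same_peak: "peak Rs = peak (R i)"
  shows "\<not> strict Rs (ennreal (\<omega> i)) (ennreal (\<phi> R \<omega> i))"
proof
  assume better: "strict Rs (ennreal (\<omega> i)) (ennreal (\<phi> R \<omega> i))"
  \<comment> \<open>reporting \<open>Rw\<close> secures exactly the endowment: an obvious manipulation\<close>
  define Rw where "Rw = kinked_pref 1 1 (\<omega> i)"
  have spw: "single_peaked Rw" and peakw: "peak Rw = ennreal (\<omega> i)"
    using single_peaked_kinked_pref[of "\<omega> i" 1 1] economyD(2)[OF ec] unfolding Rw_def by auto
  have options_w: "option_set \<phi> i Rw \<omega> \<subseteq> {\<omega> i}"
    using endowments_guarantee_at_endowment_peak[OF rule eg] economyD(3)[OF ec] peakw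
    unfolding option_set_def economy_def by auto
  define R' where "R' = R(i := Rs)"
  have ec': "economy R' \<omega>" and sp': "\<forall>j. single_peaked (R' j)"
    using ec sp unfolding R'_def economy_def by auto
  have same_allocation: "\<phi> R' \<omega> i = \<phi> R \<omega> i"
    using opo ec sp same_peak single_peaked_peakset[OF sp] single_peaked_peakset[OF economyD(1)[OF ec]]
    unfolding own_peak_only_def R'_def by metis
  have "\<phi> (R'(i := Rw)) \<omega> i = \<omega> i"
    using endowments_guarantee_at_endowment_peak[OF rule eg] ec' spw peakw
    unfolding economy_def by simp
  then have "manipulation \<phi> i Rs Rw \<omega>"
    unfolding manipulation_def using sp' better same_allocation
    by (intro exI[of _ R']) (auto simp: R'_def)
  moreover have "\<phi> R' \<omega> i \<in> option_set \<phi> i Rs \<omega>"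
    unfolding option_set_def using sp' by (auto simp: R'_def)
  ultimately have "obvious_manipulation \<phi> i Rs Rw \<omega>"
    unfolding obvious_manipulation_def using options_w better same_allocation by auto
  then show False using nom economyD(3)[OF ec] sp spw unfolding NOM_def by blast
qed

lemma allocation_between_endowment_and_peak:
  fixes \<phi> :: "('n::finite) rule"
  assumes rule: "is_rule \<phi>" and opo: "own_peak_only \<phi>" and eg: "endowments_guarantee \<phi>"
    and nom: "NOM \<phi>" and ec: "economy R \<omega>"
  shows "min (ennreal (\<omega> i)) (peak (R i)) \<le> ennreal (\<phi> R \<omega> i) \<and>
    ennreal (\<phi> R \<omega> i) \<le> max (ennreal (\<omega> i)) (peak (R i))"
proof -
  define a w p where "a = \<phi> R \<omega> i" and "w = \<omega> i" and "p = peak (R i)"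
  have a0: "0 \<le> a" and w0: "0 \<le> w" and sp: "single_peaked (R i)"
    using is_ruleD(1)[OF rule ec] economyD[OF ec] unfolding a_def w_def by auto
  have not_better: "\<not> strict Rs (ennreal w) (ennreal a)"
    if "single_peaked Rs" "peak Rs = p" for Rs
    using NOM_endowment_not_preferred[OF rule opo eg nom ec that(1)] that(2)
    unfolding a_def w_def p_def by blast
  have not_across: "\<not> (ennreal a < p \<and> p < ennreal w \<or> ennreal w < p \<and> p < ennreal a)"
  proof
    assume across: "ennreal a < p \<and> p < ennreal w \<or> ennreal w < p \<and> p < ennreal a"
    then obtain q where q: "p = ennreal q" "0 \<le> q"
      by (cases p) auto
    then have "w < q \<and> q < a \<or> a < q \<and> q < w"
      using across a0 w0 by (auto simp: ennreal_less_iff)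
    then show False
      using exists_single_peaked_across_peak[OF w0 a0] not_better q by blast
  qed
  moreover have "\<not> (a < w \<and> ennreal w \<le> p)"
    using single_peaked_strict_below[OF sp a0] not_better[OF sp] unfolding p_def by blast
  moreover have "\<not> (w < a \<and> p \<le> ennreal w)"
    using single_peaked_strict_above[OF sp w0] not_better[OF sp] unfolding p_def by blast
  ultimately show ?thesis
    unfolding a_def[symmetric] w_def[symmetric] p_def[symmetric]
    using a0 w0 by (auto simp: ennreal_less_iff min_le_iff_disj le_max_iff_disj not_le)
qed

lemma simple_reallocation_rule_if_axioms:
  fixes \<phi> :: "('n::finite) rule"
  assumes rule: "is_rule \<phi>" and opo: "own_peak_only \<phi>" and eff: "efficient \<phi>"
    and eg: "endowments_guarantee \<phi>" and nom: "NOM \<phi>"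
  shows "simple_reallocation_rule \<phi>"
  unfolding simple_reallocation_rule_def
proof (intro conjI opo allI impI)
  fix R :: "'n \<Rightarrow> pref" and \<omega> :: "'n \<Rightarrow> real" and i :: 'n
  assume ec: "economy R \<omega>"
  note between = allocation_between_endowment_and_peak[OF rule opo eg nom ec, of i]
  show "min (ennreal (\<omega> i)) (peak (R i)) \<le> ennreal (\<phi> R \<omega> i)"
    "ennreal (\<phi> R \<omega> i) \<le> max (ennreal (\<omega> i)) (peak (R i))"
    using between by auto
  assume "simple_agent R \<omega> i"
  then show "ennreal (\<phi> R \<omega> i) = peak (R i)"
    using between efficient_allocation_below_peaks[OF rule eff ec, of i]
      efficient_allocation_above_peaks[OF rule eff ec, of i]
    unfolding simple_agent_def by (auto simp: min_def max_def split: if_split_asm)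
qed

lemma simple_reallocation_rule_between:
  assumes "simple_reallocation_rule \<phi>" "economy R \<omega>"
  shows "min (ennreal (\<omega> i)) (peak (R i)) \<le> ennreal (\<phi> R \<omega> i) \<and>
    ennreal (\<phi> R \<omega> i) \<le> max (ennreal (\<omega> i)) (peak (R i))"
  using assms unfolding simple_reallocation_rule_def
  by (cases "simple_agent R \<omega> i") auto

lemma simple_reallocation_rule_at_endowment_peak:
  assumes "is_rule \<phi>" "simple_reallocation_rule \<phi>" "economy R \<omega>"
    "peak (R i) = ennreal (\<omega> i)"
  shows "\<phi> R \<omega> i = \<omega> i"
proof -
  have "ennreal (\<phi> R \<omega> i) = ennreal (\<omega> i)"
    using simple_reallocation_rule_between[OF assms(2,3), of i] assms(4) by (simp add: antisym)
  then show ?thesis using is_ruleD(1)[OF assms(1,3)] economyD(2)[OF assms(3)] by simp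
qed

lemma simple_reallocation_rule_simple_agent:
  assumes "simple_reallocation_rule \<phi>" "economy R \<omega>" "simple_agent R \<omega> i"
  shows "ennreal (\<phi> R \<omega> i) = peak (R i)"
  using assms unfolding simple_reallocation_rule_def by blast

lemma simple_reallocation_rule_one_sided:
  assumes "simple_reallocation_rule \<phi>" "economy R \<omega>"
  shows "(\<forall>k. ennreal (\<phi> R \<omega> k) \<le> peak (R k)) \<or> (\<forall>k. peak (R k) \<le> ennreal (\<phi> R \<omega> k))"
proof (cases "ennreal (sum \<omega> UNIV) \<le> (\<Sum>j\<in>UNIV. peak (R j))")
  case True
  have "ennreal (\<phi> R \<omega> k) \<le> peak (R k)" for k
    using simple_reallocation_rule_between[OF assms, of k]
      simple_reallocation_rule_simple_agent[OF assms, of k] True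
    unfolding simple_agent_def by (cases "ennreal (\<omega> k) \<le> peak (R k)") (auto simp: max_def not_le)
  then show ?thesis by blast
next
  case False
  have "peak (R k) \<le> ennreal (\<phi> R \<omega> k)" for k
    using simple_reallocation_rule_between[OF assms, of k]
      simple_reallocation_rule_simple_agent[OF assms, of k] False
    unfolding simple_agent_def by (cases "peak (R k) \<le> ennreal (\<omega> k)") (auto simp: min_def not_le split: if_split_asm)
  then show ?thesis by blast
qed

lemma weakly_preferred_to_one_sided_allocation_eq:
  fixes a x :: "'n::finite \<Rightarrow> real"
  assumes sp: "\<And>j. single_peaked (R j)" and a0: "\<And>j. 0 \<le> a j" and x0: "\<And>j. 0 \<le> x j"
    and same_total: "sum x UNIV = sum a UNIV"
    and weakly_better: "\<And>j. R j (ennreal (x j)) (ennreal (a j))"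
    and one_sided: "(\<forall>j. ennreal (a j) \<le> peak (R j)) \<or> (\<forall>j. peak (R j) \<le> ennreal (a j))"
  shows "x = a"
proof -
  have "\<not> strict (R j) (ennreal (a j)) (ennreal (x j))" for j
    using weakly_better[of j] unfolding strict_def by blast
  then have "(\<forall>j. a j \<le> x j) \<or> (\<forall>j. x j \<le> a j)"
    using one_sided single_peaked_strict_below[OF sp x0] single_peaked_strict_above[OF sp a0]
    by (meson not_le)
  then show ?thesis
    using sum_mono_inv[OF same_total] sum_mono_inv[OF same_total[symmetric]] by fastforce
qed

lemma simple_reallocation_rule_efficient:
  fixes \<phi> :: "('n::finite) rule"
  assumes rule: "is_rule \<phi>" and sr: "simple_reallocation_rule \<phi>"
  shows "efficient \<phi>"
  unfolding efficient_def
proof (intro allI impI notI)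
  fix R :: "'n \<Rightarrow> pref" and \<omega> :: "'n \<Rightarrow> real"
  assume ec: "economy R \<omega>"
  assume "\<exists>x. (\<forall>i. 0 \<le> x i) \<and> sum x UNIV = sum \<omega> UNIV \<and>
    (\<forall>i. R i (ennreal (x i)) (ennreal (\<phi> R \<omega> i))) \<and>
    (\<exists>i. strict (R i) (ennreal (x i)) (ennreal (\<phi> R \<omega> i)))"
  then obtain x i where x: "\<forall>i. 0 \<le> x i" "sum x UNIV = sum \<omega> UNIV"
      "\<forall>i. R i (ennreal (x i)) (ennreal (\<phi> R \<omega> i))"
    and strictly_better: "strict (R i) (ennreal (x i)) (ennreal (\<phi> R \<omega> i))"
    by blast
  have "x = \<phi> R \<omega>"
    by (rule weakly_preferred_to_one_sided_allocation_eq[where R = R])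
      (use economyD[OF ec] is_ruleD[OF rule ec] simple_reallocation_rule_one_sided[OF sr ec] x in auto)
  then show False using strictly_better unfolding strict_def by simp
qed

lemma simple_reallocation_rule_endowments_guarantee:
  assumes "is_rule \<phi>" "simple_reallocation_rule \<phi>"
  shows "endowments_guarantee \<phi>"
  using simple_reallocation_rule_at_endowment_peak[OF assms] single_peaked_refl economyD(1)
  unfolding endowments_guarantee_def indiff_def by metis

lemma simple_reallocation_rule_offers_endowment:
  fixes \<phi> :: "('n::finite) rule"
  assumes rule: "is_rule \<phi>" and sr: "simple_reallocation_rule \<phi>"
    and ep: "endowment_profile \<omega>" and sp: "single_peaked Ri"
  shows "\<omega> i \<in> option_set \<phi> i Ri \<omega>"
proof -
  define R where "R = (\<lambda>j. kinked_pref 1 1 (\<omega> j))(i := Ri)"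
  have sp_all: "\<forall>j. single_peaked (R j)" and peak_others: "\<forall>j. j \<noteq> i \<longrightarrow> peak (R j) = ennreal (\<omega> j)"
    using single_peaked_kinked_pref[of _ 1 1] sp ep unfolding R_def endowment_profile_def by auto
  then have ec: "economy R \<omega>" using ep unfolding economy_def by simp
  have "sum (\<phi> R \<omega>) (UNIV - {i}) = sum \<omega> (UNIV - {i})"
    using simple_reallocation_rule_at_endowment_peak[OF rule sr ec] peak_others by (intro sum.cong) auto
  then have "\<phi> R \<omega> i = \<omega> i"
    using is_ruleD(2)[OF rule ec] by (simp add: sum.remove[of UNIV i])
  then show ?thesis
    unfolding option_set_def using sp_all by (auto simp: R_def intro!: exI[of _ R])
qed

lemma simple_reallocation_rule_NOM:
  fixes \<phi> :: "('n::finite) rule"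
  assumes rule: "is_rule \<phi>" and sr: "simple_reallocation_rule \<phi>"
  shows "NOM \<phi>"
  unfolding NOM_def obvious_manipulation_def
proof (intro allI impI notI)
  fix \<omega> :: "'n \<Rightarrow> real" and i :: 'n and Ri Ri' :: pref
  assume ep: "endowment_profile \<omega>" and sp: "single_peaked Ri" and sp': "single_peaked Ri'"
  have "Ri (ennreal x) (ennreal (\<omega> i))" if option: "x \<in> option_set \<phi> i Ri \<omega>" for x
  proof -
    obtain R where R: "\<forall>j. single_peaked (R j)" "R i = Ri" "x = \<phi> R \<omega> i"
      using option unfolding option_set_def by blast
    then have ec: "economy R \<omega>" using ep unfolding economy_def by simp
    show ?thesis
      using single_peaked_weakly_prefers_between[OF sp economyD(2)[OF ec] is_ruleD(1)[OF rule ec]]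
        simple_reallocation_rule_between[OF sr ec, of i] R by simp
  qed
  moreover assume "manipulation \<phi> i Ri Ri' \<omega> \<and>
    (\<forall>x'\<in>option_set \<phi> i Ri' \<omega>. \<exists>x\<in>option_set \<phi> i Ri \<omega>. strict Ri (ennreal x') (ennreal x))"
  ultimately show False
    using simple_reallocation_rule_offers_endowment[OF rule sr ep sp'] unfolding strict_def by blast
qed

theorem proposition3:
  fixes \<phi> :: "('n::finite \<Rightarrow> pref) \<Rightarrow> ('n \<Rightarrow> real) \<Rightarrow> 'n \<Rightarrow> real"
  assumes "is_rule \<phi>"
  shows "(own_peak_only \<phi> \<and> efficient \<phi> \<and> endowments_guarantee \<phi> \<and> NOM \<phi>)
           \<longleftrightarrow> simple_reallocation_rule \<phi>"
  using simple_reallocation_rule_if_axioms[OF assms] simple_reallocation_rule_efficient[OF assms]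
    simple_reallocation_rule_endowments_guarantee[OF assms] simple_reallocation_rule_NOM[OF assms]
  unfolding simple_reallocation_rule_def by blast

end
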